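(* Let $Q=(\mathcal S,|\cdot|,q)$ be a quasi-reversible queueing system satisfying Assumption 1 with finite $\mathcal S$, let $\Pi$ be a stationary measure of $Q$, and let $r:\mathcal S\to\mathbb R$, $R:\mathcal S\times\mathcal S\to\mathbb R$ be reward functions. For an admission policy $\gamma$ let $G_\gamma=\sum_{s}\Pi_\gamma(s)r(s)+\sum_{s,t}\Pi_\gamma(s)q_\gamma(s,t)R(s,t)$, where $\Pi_\gamma$ is the unique stationary distribution of $q_\gamma$. Then there exists a Ferrers set $\mathcal A\subseteq|\mathcal S|$ such that the deterministic policy $\gamma^{\mathcal A}_i(s)=\mathbf 1\{|s|+e_i\in\mathcal A\}$ (which is balanced, with balance function $\mathbf 1_{\mathcal A}$) satisfies $G_{\gamma^{\mathcal A}}\ge G_\gamma$ for every balanced admission policy $\gamma$. Equivalently, the function $\Gamma_{\mathcal A}(x)=\frac1Z\mathbf 1\{x\in\mathcal A\}$, $Z=\sum_{s:|s|\in\mathcal A}\Pi(s)$, is an optimal solution of the linear program: maximize over $\Gamma:|\mathcal S|\to\mathbb R$ $$\sum_{s\in\mathcal S}\Pi(s)\Gamma(|s|)r(s)+\sum_{s\in\mathcal S}\sum_{i=1}^n\sum_{t\in\mathcal S_{|s|+e_i}}\Pi(s)\Gamma(|s|+e_i)q(s,t)R(s,t)+\sum_{s\in\mathcal S}\sum_{t\notin\bigcup_i\mathcal S_{|s|+e_i}}\Pi(s)\Gamma(|s|)q(s,t)R(s,t)$$ subject to $\Gamma(x)\ge0$ for all $x$, $\Gamma(x)\ge\Gamma(x+e_i)$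 whenever $x,x+e_i\in|\mathcal S|$, and $\sum_{s\in\mathcal S}\Pi(s)\Gamma(|s|)=1$.
   Context: $e_i$ is the $i$-th unit vector; $\le$ componentwise; a Ferrers set $\mathcal X\subseteq\mathbb N^n$ contains $0$ and every $y\in\mathbb N^n$ with $y\le x$ for some $x\in\mathcal X$. Queueing system $Q=(\mathcal S,|\cdot|,q)$: $\mathcal S$ countable, $|\cdot|:\mathcal S\to\mathbb N^n$, $|\mathcal S|$ Ferrers, unique $\varnothing$ with $|\varnothing|=0$, $q$ a CTMC rate kernel with $q(s,t)=0$ unless $t\in\mathcal S_{|s|}\cup\bigcup_i(\mathcal S_{|s|+e_i}\cup\mathcal S_{|s|-e_i})$, $\mathcal S_x=\{s:|s|=x\}$. Assumption 1: there is $\mathcal S_{\mathrm{rec}}$ with (1) every $s\in\mathcal S_{\mathrm{rec}}$ reachable from $\varnothing$ by a positive-rate path along which $|\cdot|$ is non-decreasing; (2) no $s\notin\mathcal S_{\mathrm{rec}}$ reachable from $\varnothing$; (3) from every $s$ a positive-rate path to $\varnothing$ along which $|\cdot|$ is non-increasing; (4) $|\mathcal S_{\mathrm{rec}}|$ Ferrers. Quasi-reversibility: stationary measures satisfy $\Pi(s)\sum_{t\in\mathcal S_{|s|+e_i}}q(s,t)=\sum_{t\in\mathcal S_{|s|+e_i}}\Pi(t)q(t,s)$ for all $s,i$. An admission policy is $\gamma:\mathcal S\to[0,1]^n$; $q_\gamma(s,t)=q(s,t)\gamma_i(s)$ if $t\in\mathcal S_{|s|+e_i}$, $q_\gamma(s,t)=q(s,t)$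 otherwise. A policy is balanced if it is microstate-independent ($\gamma(s)=\gamma(t)$ whenever $|s|=|t|$, so it is viewed as a function of $x=|s|$) and there exists $\Gamma:|\mathcal S|\to\mathbb R_{\ge0}$ with $\Gamma(0)=1$ and $\Gamma(x)\gamma_i(x)=\Gamma(x+e_i)$ whenever $x,x+e_i\in|\mathcal S|$. *)

theory Defs
  imports Complex_Main
begin

text \<open>Vectors of \<open>\<nat>\<^sup>n\<close> are represented as functions \<open>nat \<Rightarrow> nat\<close> vanishing outside
  \<open>{..<n}\<close>; the order is the componentwise (pointwise) order on functions.\<close>

definition vecs :: "nat \<Rightarrow> (nat \<Rightarrow> nat) set" where
  "vecs n = {x. \<forall>j\<ge>n. x j = 0}"

definition zvec :: "nat \<Rightarrow> nat" where
  "zvec = (\<lambda>_. 0)"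

definition adde :: "(nat \<Rightarrow> nat) \<Rightarrow> nat \<Rightarrow> (nat \<Rightarrow> nat)" where
  "adde x i = x(i := Suc (x i))"

definition Ferrers :: "nat \<Rightarrow> (nat \<Rightarrow> nat) set \<Rightarrow> bool" where
  "Ferrers n X \<longleftrightarrow> X \<subseteq> vecs n \<and> zvec \<in> X \<and> (\<forall>x\<in>X. \<forall>y. y \<le> x \<longrightarrow> y \<in> X)"

definition queueing_system ::
  "nat \<Rightarrow> 'a set \<Rightarrow> ('a \<Rightarrow> nat \<Rightarrow> nat) \<Rightarrow> ('a \<Rightarrow> 'a \<Rightarrow> real) \<Rightarrow> 'a \<Rightarrow> bool" where
  "queueing_system n S sz q e0 \<longleftrightarrow>
     (\<forall>s\<in>S. sz s \<in> vecs n) \<and>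
     Ferrers n (sz ` S) \<and>
     e0 \<in> S \<and> sz e0 = zvec \<and> (\<forall>s\<in>S. sz s = zvec \<longrightarrow> s = e0) \<and>
     (\<forall>s\<in>S. \<forall>t\<in>S. s \<noteq> t \<longrightarrow> q s t \<ge> 0) \<and>
     (\<forall>s\<in>S. \<forall>t\<in>S. q s t \<noteq> 0 \<longrightarrow>
        sz t = sz s \<or> (\<exists>i<n. sz t = adde (sz s) i \<or> sz s = adde (sz t) i))"

definition path_from_to ::
  "'a set \<Rightarrow> ('a \<Rightarrow> 'a \<Rightarrow> real) \<Rightarrow> ('a \<Rightarrow> 'a \<Rightarrow> bool) \<Rightarrow> 'a \<Rightarrow> 'a \<Rightarrow> bool" where
  "path_from_to S q P s t \<longleftrightarrow>
     (\<exists>xs. xs \<noteq> [] \<and> hd xs = s \<and> last xs = t \<and> set xs \<subseteq> S \<and>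
        (\<forall>k. Suc k < length xs \<longrightarrow> q (xs ! k) (xs ! Suc k) > 0 \<and> P (xs ! k) (xs ! Suc k)))"

definition assumption1 ::
  "nat \<Rightarrow> 'a set \<Rightarrow> ('a \<Rightarrow> nat \<Rightarrow> nat) \<Rightarrow> ('a \<Rightarrow> 'a \<Rightarrow> real) \<Rightarrow> 'a \<Rightarrow> bool" where
  "assumption1 n S sz q e0 \<longleftrightarrow>
     (\<exists>Srec \<subseteq> S.
        (\<forall>s\<in>Srec. path_from_to S q (\<lambda>u v. sz u \<le> sz v) e0 s) \<and>
        (\<forall>s\<in>S - Srec. \<not> path_from_to S q (\<lambda>_ _. True) e0 s) \<and>
        (\<forall>s\<in>S. path_from_to S q (\<lambda>u v. sz v \<le> sz u) s e0) \<and>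
        Ferrers n (sz ` Srec))"

definition stationary_measure :: "'a set \<Rightarrow> ('a \<Rightarrow> 'a \<Rightarrow> real) \<Rightarrow> ('a \<Rightarrow> real) \<Rightarrow> bool" where
  "stationary_measure S k P \<longleftrightarrow>
     (\<forall>s\<in>S. P s \<ge> 0) \<and> (\<exists>s\<in>S. P s \<noteq> 0) \<and>
     (\<forall>s\<in>S. P s * (\<Sum>t\<in>S. k s t) = (\<Sum>t\<in>S. P t * k t s))"

definition stationary_distribution :: "'a set \<Rightarrow> ('a \<Rightarrow> 'a \<Rightarrow> real) \<Rightarrow> ('a \<Rightarrow> real) \<Rightarrow> bool" where
  "stationary_distribution S k P \<longleftrightarrow>
     (\<forall>s\<in>S. P s \<ge> 0) \<and> (\<Sum>s\<in>S. P s) = 1 \<and>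
     (\<forall>s\<in>S. P s * (\<Sum>t\<in>S. k s t) = (\<Sum>t\<in>S. P t * k t s))"

definition level :: "'a set \<Rightarrow> ('a \<Rightarrow> nat \<Rightarrow> nat) \<Rightarrow> (nat \<Rightarrow> nat) \<Rightarrow> 'a set" where
  "level S sz x = {s\<in>S. sz s = x}"

definition quasi_reversible ::
  "nat \<Rightarrow> 'a set \<Rightarrow> ('a \<Rightarrow> nat \<Rightarrow> nat) \<Rightarrow> ('a \<Rightarrow> 'a \<Rightarrow> real) \<Rightarrow> bool" where
  "quasi_reversible n S sz q \<longleftrightarrow>
     (\<forall>P. stationary_measure S q P \<longrightarrow>
        (\<forall>s\<in>S. \<forall>i<n.
           P s * (\<Sum>t\<in>level S sz (adde (sz s) i). q s t)
           = (\<Sum>t\<in>level S sz (adde (sz s) i). P t * q t s)))"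

definition admission_policy :: "nat \<Rightarrow> 'a set \<Rightarrow> ('a \<Rightarrow> nat \<Rightarrow> real) \<Rightarrow> bool" where
  "admission_policy n S \<gamma> \<longleftrightarrow> (\<forall>s\<in>S. \<forall>i<n. 0 \<le> \<gamma> s i \<and> \<gamma> s i \<le> 1)"

definition qpol ::
  "nat \<Rightarrow> ('a \<Rightarrow> nat \<Rightarrow> nat) \<Rightarrow> ('a \<Rightarrow> 'a \<Rightarrow> real) \<Rightarrow> ('a \<Rightarrow> nat \<Rightarrow> real) \<Rightarrow> 'a \<Rightarrow> 'a \<Rightarrow> real" where
  "qpol n sz q \<gamma> s t =
     (if \<exists>i<n. sz t = adde (sz s) i
      then q s t * \<gamma> s (THE i. i < n \<and> sz t = adde (sz s) i)
      else q s t)"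

definition balanced :: "nat \<Rightarrow> 'a set \<Rightarrow> ('a \<Rightarrow> nat \<Rightarrow> nat) \<Rightarrow> ('a \<Rightarrow> nat \<Rightarrow> real) \<Rightarrow> bool" where
  "balanced n S sz \<gamma> \<longleftrightarrow>
     (\<forall>s\<in>S. \<forall>t\<in>S. sz s = sz t \<longrightarrow> (\<forall>i<n. \<gamma> s i = \<gamma> t i)) \<and>
     (\<exists>\<Gamma> :: (nat \<Rightarrow> nat) \<Rightarrow> real.
        (\<forall>x\<in>sz ` S. \<Gamma> x \<ge> 0) \<and> \<Gamma> zvec = 1 \<and>
        (\<forall>s\<in>S. \<forall>i<n. adde (sz s) i \<in> sz ` S \<longrightarrow> \<Gamma> (sz s) * \<gamma> s i = \<Gamma> (adde (sz s) i)))"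

definition det_policy :: "('a \<Rightarrow> nat \<Rightarrow> nat) \<Rightarrow> (nat \<Rightarrow> nat) set \<Rightarrow> 'a \<Rightarrow> nat \<Rightarrow> real" where
  "det_policy sz A s i = (if adde (sz s) i \<in> A then 1 else 0)"

definition reward :: "'a set \<Rightarrow> ('a \<Rightarrow> 'a \<Rightarrow> real) \<Rightarrow> ('a \<Rightarrow> real) \<Rightarrow> ('a \<Rightarrow> 'a \<Rightarrow> real)
    \<Rightarrow> ('a \<Rightarrow> real) \<Rightarrow> real" where
  "reward S k r R P = (\<Sum>s\<in>S. P s * r s) + (\<Sum>s\<in>S. \<Sum>t\<in>S. P s * k s t * R s t)"

definition lp_objective ::
  "nat \<Rightarrow> 'a set \<Rightarrow> ('a \<Rightarrow> nat \<Rightarrow> nat) \<Rightarrow> ('a \<Rightarrow> 'a \<Rightarrow> real) \<Rightarrow> ('a \<Rightarrow> real)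
    \<Rightarrow> ('a \<Rightarrow> real) \<Rightarrow> ('a \<Rightarrow> 'a \<Rightarrow> real) \<Rightarrow> ((nat \<Rightarrow> nat) \<Rightarrow> real) \<Rightarrow> real" where
  "lp_objective n S sz q Pi r R \<Gamma> =
     (\<Sum>s\<in>S. Pi s * \<Gamma> (sz s) * r s)
     + (\<Sum>s\<in>S. \<Sum>i<n. \<Sum>t\<in>level S sz (adde (sz s) i).
          Pi s * \<Gamma> (adde (sz s) i) * q s t * R s t)
     + (\<Sum>s\<in>S. \<Sum>t\<in>{t\<in>S. \<not> (\<exists>i<n. sz t = adde (sz s) i)}.
          Pi s * \<Gamma> (sz s) * q s t * R s t)"

definition lp_feasible ::
  "nat \<Rightarrow> 'a set \<Rightarrow> ('a \<Rightarrow> nat \<Rightarrow> nat) \<Rightarrow> ('a \<Rightarrow> real) \<Rightarrow> ((nat \<Rightarrow> nat) \<Rightarrow> real) \<Rightarrow> bool" where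
  "lp_feasible n S sz Pi \<Gamma> \<longleftrightarrow>
     (\<forall>x\<in>sz ` S. \<Gamma> x \<ge> 0) \<and>
     (\<forall>x\<in>sz ` S. \<forall>i<n. adde x i \<in> sz ` S \<longrightarrow> \<Gamma> x \<ge> \<Gamma> (adde x i)) \<and>
     (\<Sum>s\<in>S. Pi s * \<Gamma> (sz s)) = 1"

definition GammaA :: "'a set \<Rightarrow> ('a \<Rightarrow> nat \<Rightarrow> nat) \<Rightarrow> ('a \<Rightarrow> real) \<Rightarrow> (nat \<Rightarrow> nat) set
    \<Rightarrow> (nat \<Rightarrow> nat) \<Rightarrow> real" where
  "GammaA S sz Pi A x = (if x \<in> A then 1 / (\<Sum>s\<in>{s\<in>S. sz s \<in> A}. Pi s) else 0)"

end

theory Submission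
  imports Defs
begin

text \<open>For a balanced policy with balance function \<open>\<Gamma>\<close>, quasi-reversibility makes
  \<open>\<Pi>(s) \<Gamma>(|s|)\<close> an invariant measure of the controlled kernel (product form). Assumption 1 makes
  the stationary distribution unique, so the long-run reward of the policy is the value of the linear
  program at the normalised balance function, a feasible point. Feasible points are nonnegative and
  nonincreasing on the Ferrers set \<open>|S|\<close>, hence nonnegative combinations of indicators of Ferrers
  sets; by linearity the optimum is attained at a normalised indicator \<open>\<Gamma>_A\<close>, and \<open>\<Gamma>_A\<close> is
  realised by the deterministic policy \<open>\<gamma>^A\<close>.\<close>

section \<open>Stationary measures of finite rate kernels\<close>

definition rate_kernel :: "'a set \<Rightarrow> ('a \<Rightarrow> 'a \<Rightarrow> real) \<Rightarrow> bool" where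
  "rate_kernel S k \<longleftrightarrow> (\<forall>s\<in>S. \<forall>t\<in>S. s \<noteq> t \<longrightarrow> 0 \<le> k s t)"

definition invariant_measure :: "'a set \<Rightarrow> ('a \<Rightarrow> 'a \<Rightarrow> real) \<Rightarrow> ('a \<Rightarrow> real) \<Rightarrow> bool" where
  "invariant_measure S k D \<longleftrightarrow>
     (\<forall>s\<in>S. 0 \<le> D s) \<and> (\<forall>s\<in>S. D s * (\<Sum>t\<in>S. k s t) = (\<Sum>t\<in>S. D t * k t s))"

lemma stationary_measure_iff:
  "stationary_measure S k D \<longleftrightarrow> invariant_measure S k D \<and> (\<exists>s\<in>S. D s \<noteq> 0)"
  unfolding stationary_measure_def invariant_measure_def by blast

lemma stationary_distribution_iff:
  "stationary_distribution S k D \<longleftrightarrow> invariant_measure S k D \<and> sum D S = 1"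
  unfolding stationary_distribution_def invariant_measure_def by blast

lemma path_from_to_refl: "a \<in> S \<Longrightarrow> path_from_to S k P a a"
  unfolding path_from_to_def by (intro exI[of _ "[a]"]) auto

lemma path_from_to_snoc:
  assumes "path_from_to S k P a b" and "c \<in> S" "0 < k b c" "P b c"
  shows "path_from_to S k P a c"
proof -
  obtain xs where xs: "xs \<noteq> []" "hd xs = a" "last xs = b" "set xs \<subseteq> S"
    and steps: "\<forall>j. Suc j < length xs \<longrightarrow> 0 < k (xs ! j) (xs ! Suc j) \<and> P (xs ! j) (xs ! Suc j)"
    using assms(1) unfolding path_from_to_def by blast
  have "\<forall>j. Suc j < length (xs @ [c]) \<longrightarrow>
      0 < k ((xs @ [c]) ! j) ((xs @ [c]) ! Suc j) \<and> P ((xs @ [c]) ! j) ((xs @ [c]) ! Suc j)"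
  proof (intro allI impI)
    fix j assume "Suc j < length (xs @ [c])"
    then consider "Suc j < length xs" | "j = length xs - 1" by fastforce
    then show "0 < k ((xs @ [c]) ! j) ((xs @ [c]) ! Suc j) \<and> P ((xs @ [c]) ! j) ((xs @ [c]) ! Suc j)"
      using steps assms(3,4) xs(1,3) by cases (auto simp: nth_append last_conv_nth)
  qed
  then show ?thesis
    unfolding path_from_to_def using xs assms(2) by (intro exI[of _ "xs @ [c]"]) auto
qed

lemma path_from_to_mono:
  assumes "path_from_to S k P a b"
    and "\<And>u v. P u v \<Longrightarrow> 0 < k u v \<Longrightarrow> 0 < k' u v \<and> P' u v"
  shows "path_from_to S k' P' a b"
proof -
  obtain xs where "xs \<noteq> []" "hd xs = a" "last xs = b" "set xs \<subseteq> S"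
    and "\<forall>j. Suc j < length xs \<longrightarrow> 0 < k (xs ! j) (xs ! Suc j) \<and> P (xs ! j) (xs ! Suc j)"
    using assms(1) unfolding path_from_to_def by blast
  then show ?thesis
    unfolding path_from_to_def using assms(2) by blast
qed

lemma path_from_to_invariant:
  assumes "path_from_to S k P a b" and "Q a"
    and step: "\<And>u v. u \<in> S \<Longrightarrow> v \<in> S \<Longrightarrow> Q u \<Longrightarrow> 0 < k u v \<Longrightarrow> P u v \<Longrightarrow> Q v"
  shows "Q b"
proof -
  obtain xs where xs: "xs \<noteq> []" "hd xs = a" "last xs = b" "set xs \<subseteq> S"
    and steps: "\<forall>j. Suc j < length xs \<longrightarrow> 0 < k (xs ! j) (xs ! Suc j) \<and> P (xs ! j) (xs ! Suc j)"
    using assms(1) unfolding path_from_to_def by blast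
  have "Q (xs ! j)" if "j < length xs" for j
    using that
  proof (induction j)
    case 0
    then show ?case using xs(1,2) \<open>Q a\<close> by (simp add: hd_conv_nth)
  next
    case (Suc j)
    then have "Q (xs ! j)" by simp
    moreover have "xs ! j \<in> S" "xs ! Suc j \<in> S"
      using Suc.prems xs(4) nth_mem[of j xs] nth_mem[of "Suc j" xs] by auto
    moreover have "0 < k (xs ! j) (xs ! Suc j)" "P (xs ! j) (xs ! Suc j)"
      using Suc.prems steps by blast+
    ultimately show ?case using step by blast
  qed
  then have "Q (xs ! (length xs - 1))" using xs(1) by simp
  then show ?thesis using xs(1,3) by (simp add: last_conv_nth)
qed

lemma invariant_measure_pos_step:
  assumes "finite S" "rate_kernel S k" "invariant_measure S k D"
    and "a \<in> S" "c \<in> S" "0 < D a" "0 < k a c"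
  shows "0 < D c"
proof (cases "a = c")
  case True
  then show ?thesis using assms(6) by simp
next
  case False
  have "D a * k a c \<le> (\<Sum>t\<in>S-{c}. D t * k t c)"
    using assms False by (intro member_le_sum) (auto simp: rate_kernel_def invariant_measure_def)
  moreover have "0 < D a * k a c" using assms(6,7) by simp
  moreover have "D c * (\<Sum>t\<in>S. k c t) = (\<Sum>t\<in>S. D t * k t c)"
    using assms(3,5) unfolding invariant_measure_def by blast
  ultimately have "0 < D c * (\<Sum>t\<in>S-{c}. k c t)"
    using assms(1,5) by (simp add: sum.remove algebra_simps)
  then have "D c \<noteq> 0" by auto
  then show ?thesis using assms(3,5) unfolding invariant_measure_def by force
qed

lemma invariant_measure_pos_along_path:
  assumes "finite S" "rate_kernel S k" "invariant_measure S k D"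
    and "path_from_to S k P a b" "0 < D a"
  shows "0 < D b"
  using assms(4,5) by (rule path_from_to_invariant) (use invariant_measure_pos_step[OF assms(1-3)] in blast)

lemma stationary_measure_pos_at_accessible:
  assumes "finite S" "rate_kernel S k" "stationary_measure S k D"
    and "\<forall>s\<in>S. path_from_to S k P s e0"
  shows "0 < D e0"
proof -
  have inv: "invariant_measure S k D" and "\<exists>s\<in>S. D s \<noteq> 0"
    using assms(3) unfolding stationary_measure_iff by blast+
  then obtain s where "s \<in> S" "0 < D s"
    unfolding invariant_measure_def by force
  then show ?thesis
    using invariant_measure_pos_along_path[OF assms(1,2) inv] assms(4) by blast
qed

text \<open>Summing the balance equations over \<open>S - U\<close>, the flow inside \<open>S - U\<close> cancels, so the
  flow from \<open>S - U\<close> into \<open>U\<close> equals the flow out of \<open>U\<close>, which is zero.\<close>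
lemma invariant_measure_no_flow_into_closed:
  assumes fin: "finite S" and "rate_kernel S k" "invariant_measure S k D" "U \<subseteq> S"
    and closed: "\<And>u w. u \<in> U \<Longrightarrow> w \<in> S - U \<Longrightarrow> k u w = 0"
    and "w \<in> S - U" "u \<in> U"
  shows "D w * k w u = 0"
proof -
  define W where "W = S - U"
  have split: "sum f S = sum f W + sum f U" for f :: "'a \<Rightarrow> real"
    using sum.subset_diff[OF \<open>U \<subseteq> S\<close> fin] unfolding W_def by simp
  have "(\<Sum>s\<in>W. D s * (\<Sum>t\<in>S. k s t)) = (\<Sum>s\<in>W. \<Sum>t\<in>S. D t * k t s)"
    using assms(3) unfolding invariant_measure_def W_def by (intro sum.cong) auto
  then have "(\<Sum>s\<in>W. \<Sum>t\<in>W. D s * k s t) + (\<Sum>s\<in>W. \<Sum>t\<in>U. D s * k s t)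
      = (\<Sum>s\<in>W. \<Sum>t\<in>W. D t * k t s) + (\<Sum>s\<in>W. \<Sum>t\<in>U. D t * k t s)"
    by (simp only: split distrib_left sum_distrib_left sum.distrib)
  moreover have "(\<Sum>s\<in>W. \<Sum>t\<in>U. D t * k t s) = 0"
    using closed unfolding W_def by simp
  moreover have "(\<Sum>s\<in>W. \<Sum>t\<in>W. D s * k s t) = (\<Sum>s\<in>W. \<Sum>t\<in>W. D t * k t s)"
    by (rule sum.swap)
  ultimately have flow: "(\<Sum>s\<in>W. \<Sum>t\<in>U. D s * k s t) = 0"
    by simp
  have fin_WU: "finite W" "finite U"
    using fin \<open>U \<subseteq> S\<close> unfolding W_def by (auto intro: finite_subset)
  have nonneg: "0 \<le> D s * k s t" if "s \<in> W" "t \<in> U" for s t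
    using assms(2-4) that unfolding W_def rate_kernel_def invariant_measure_def by fastforce
  have "\<forall>s\<in>W. \<forall>t\<in>U. D s * k s t = 0"
    using flow fin_WU nonneg by (simp add: sum_nonneg_eq_0_iff sum_nonneg)
  then show ?thesis
    using assms(6,7) unfolding W_def by blast
qed

lemma invariant_measure_vanishes_off_reachable:
  assumes fin: "finite S" and rk: "rate_kernel S k" and inv: "invariant_measure S k D"
    and "e0 \<in> S" and to_e0: "\<forall>s\<in>S. path_from_to S k (\<lambda>_ _. True) s e0"
    and "s \<in> S" "\<not> path_from_to S k (\<lambda>_ _. True) e0 s"
  shows "D s = 0"
proof (rule ccontr)
  define U where "U = {s\<in>S. path_from_to S k (\<lambda>_ _. True) e0 s}"
  have "U \<subseteq> S" unfolding U_def by blast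
  have closed: "k u w = 0" if "u \<in> U" "w \<in> S - U" for u w
  proof (rule ccontr)
    assume "k u w \<noteq> 0"
    moreover have "0 \<le> k u w"
      using that rk \<open>U \<subseteq> S\<close> unfolding rate_kernel_def by (metis DiffD1 DiffD2 subsetD)
    ultimately have "0 < k u w" by simp
    moreover have "path_from_to S k (\<lambda>_ _. True) e0 u"
      using that(1) unfolding U_def by simp
    ultimately have "path_from_to S k (\<lambda>_ _. True) e0 w"
      using path_from_to_snoc[of S k "\<lambda>_ _. True" e0 u w] that(2) by simp
    then show False using that(2) unfolding U_def by simp
  qed
  assume "D s \<noteq> 0"
  then have "0 < D s" using inv \<open>s \<in> S\<close> unfolding invariant_measure_def by force
  have "e0 \<notin> U \<and> 0 < D e0"
  proof (rule path_from_to_invariant[of S k "\<lambda>_ _. True" s e0])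
    show "path_from_to S k (\<lambda>_ _. True) s e0" using to_e0 \<open>s \<in> S\<close> by blast
    show "s \<notin> U \<and> 0 < D s" using \<open>0 < D s\<close> assms(7) unfolding U_def by simp
  next
    fix u v assume uv: "u \<in> S" "v \<in> S" "u \<notin> U \<and> 0 < D u" "0 < k u v"
    have "v \<notin> U"
    proof
      assume "v \<in> U"
      then have "D u * k u v = 0"
        using invariant_measure_no_flow_into_closed[OF fin rk inv \<open>U \<subseteq> S\<close> closed, of u v] uv
        by blast
      then show False using uv by simp
    qed
    moreover have "0 < D v"
      using invariant_measure_pos_step[OF fin rk inv] uv by blast
    ultimately show "v \<notin> U \<and> 0 < D v" ..
  qed
  moreover have "e0 \<in> U"
    using path_from_to_refl[of e0 S k "\<lambda>_ _. True"] \<open>e0 \<in> S\<close> unfolding U_def by simp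
  ultimately show False by blast
qed

lemma stationary_measure_pos_iff_reachable:
  assumes fin: "finite S" and rk: "rate_kernel S k" and "e0 \<in> S"
    and to_e0: "\<forall>s\<in>S. path_from_to S k (\<lambda>_ _. True) s e0"
    and D: "stationary_measure S k D" and "u \<in> S"
  shows "0 < D u \<longleftrightarrow> path_from_to S k (\<lambda>_ _. True) e0 u"
proof
  have inv: "invariant_measure S k D" using D unfolding stationary_measure_iff by blast
  show "path_from_to S k (\<lambda>_ _. True) e0 u" if "0 < D u"
    using invariant_measure_vanishes_off_reachable[OF fin rk inv \<open>e0 \<in> S\<close> to_e0 \<open>u \<in> S\<close>] that by force
  show "0 < D u" if "path_from_to S k (\<lambda>_ _. True) e0 u"
    using invariant_measure_pos_along_path[OF fin rk inv that]
      stationary_measure_pos_at_accessible[OF fin rk D to_e0] by blast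
qed

lemma invariant_measure_diff:
  assumes inv1: "invariant_measure S k P1" and inv2: "invariant_measure S k P2"
    and "\<forall>u\<in>S. c * P1 u \<le> P2 u"
  shows "invariant_measure S k (\<lambda>u. P2 u - c * P1 u)"
  unfolding invariant_measure_def
proof (intro conjI ballI)
  fix u assume "u \<in> S"
  then show "0 \<le> P2 u - c * P1 u" using assms(3) by simp
  have "P1 u * (\<Sum>t\<in>S. k u t) = (\<Sum>t\<in>S. P1 t * k t u)"
    and "P2 u * (\<Sum>t\<in>S. k u t) = (\<Sum>t\<in>S. P2 t * k t u)"
    using inv1 inv2 \<open>u \<in> S\<close> unfolding invariant_measure_def by blast+
  then show "(P2 u - c * P1 u) * (\<Sum>t\<in>S. k u t) = (\<Sum>t\<in>S. (P2 t - c * P1 t) * k t u)"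
    by (simp add: left_diff_distrib sum_subtractf mult.assoc flip: sum_distrib_left)
qed

lemma stationary_distribution_imp_measure:
  "stationary_distribution S k P \<Longrightarrow> stationary_measure S k P"
  unfolding stationary_distribution_iff stationary_measure_iff by (metis sum.neutral zero_neq_one)

lemma stationary_distribution_unique:
  assumes fin: "finite S" and rk: "rate_kernel S k" and "e0 \<in> S"
    and to_e0: "\<forall>s\<in>S. path_from_to S k (\<lambda>_ _. True) s e0"
    and P1: "stationary_distribution S k P1" and P2: "stationary_distribution S k P2"
    and "s \<in> S"
  shows "P1 s = P2 s"
proof -
  note support = stationary_measure_pos_iff_reachable[OF fin rk \<open>e0 \<in> S\<close> to_e0]
  define U where "U = {u\<in>S. path_from_to S k (\<lambda>_ _. True) e0 u}"
  have "finite U" using fin unfolding U_def by simp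
  have "e0 \<in> U"
    using path_from_to_refl[of e0 S k "\<lambda>_ _. True"] \<open>e0 \<in> S\<close> unfolding U_def by simp
  have P1_pos: "0 < P1 u" if "u \<in> U" for u
    using support[OF stationary_distribution_imp_measure[OF P1]] that unfolding U_def by blast
  have P_U: "P u = 0" if "stationary_distribution S k P" "u \<in> S" "u \<notin> U" for P u
    using support[OF stationary_distribution_imp_measure[OF that(1)] that(2)] that
    unfolding U_def stationary_distribution_def by force
  text \<open>Subtract from \<open>P2\<close> the largest multiple of \<open>P1\<close> that keeps it nonnegative.\<close>
  define c where "c = Min ((\<lambda>u. P2 u / P1 u) ` U)"
  have "c \<in> (\<lambda>u. P2 u / P1 u) ` U"
    unfolding c_def using \<open>finite U\<close> \<open>e0 \<in> U\<close> by (intro Min_in) auto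
  then obtain u0 where "u0 \<in> U" and c_u0: "c = P2 u0 / P1 u0" by blast
  have "c * P1 u \<le> P2 u" if "u \<in> S" for u
  proof (cases "u \<in> U")
    case True
    then have "c \<le> P2 u / P1 u" using \<open>finite U\<close> unfolding c_def by simp
    then show ?thesis using P1_pos[OF True] by (simp add: le_divide_eq)
  qed (use P_U[OF P1] P_U[OF P2] that in simp)
  then have "invariant_measure S k (\<lambda>u. P2 u - c * P1 u)"
    using invariant_measure_diff P1 P2 unfolding stationary_distribution_iff by blast
  moreover have "\<not> 0 < P2 u0 - c * P1 u0"
    using P1_pos[OF \<open>u0 \<in> U\<close>] c_u0 by simp
  ultimately have "\<not> stationary_measure S k (\<lambda>u. P2 u - c * P1 u)"
    using support \<open>u0 \<in> U\<close> unfolding U_def by blast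
  then have P2_eq: "P2 u = c * P1 u" if "u \<in> S" for u
    using \<open>invariant_measure S k (\<lambda>u. P2 u - c * P1 u)\<close> that unfolding stationary_measure_iff by auto
  then have "sum P2 S = c * sum P1 S"
    by (simp add: sum_distrib_left)
  then have "c = 1" using P1 P2 unfolding stationary_distribution_iff by simp
  then show ?thesis using P2_eq \<open>s \<in> S\<close> by simp
qed

section \<open>Arrival-controlled kernels\<close>

lemma adde_inj: "adde x i = adde x j \<Longrightarrow> i = j"
  unfolding adde_def by (metis fun_upd_apply n_not_Suc_n)

lemma le_adde: "x \<le> adde x i"
  unfolding adde_def le_fun_def by simp

lemma not_adde_le: "\<not> adde x i \<le> x"
  unfolding adde_def le_fun_def by (metis Suc_n_not_le_n fun_upd_same)

definition upper_neighbours :: "nat \<Rightarrow> 'a set \<Rightarrow> ('a \<Rightarrow> nat \<Rightarrow> nat) \<Rightarrow> (nat \<Rightarrow> nat) \<Rightarrow> 'a set" where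
  "upper_neighbours n S sz x = {t\<in>S. \<exists>i<n. sz t = adde x i}"

lemma sum_upper_neighbours:
  assumes "finite S"
  shows "(\<Sum>t\<in>upper_neighbours n S sz x. f t) = (\<Sum>i<n. \<Sum>t\<in>level S sz (adde x i). f t)"
proof -
  have "upper_neighbours n S sz x = (\<Union>i<n. level S sz (adde x i))"
    unfolding upper_neighbours_def level_def by blast
  moreover have "level S sz (adde x i) \<inter> level S sz (adde x j) = {}" if "i \<noteq> j" for i j
    using adde_inj that unfolding level_def by fastforce
  ultimately show ?thesis
    using assms by (simp add: sum.UNION_disjoint level_def)
qed

lemma qpol_up:
  assumes "i < n" "sz t = adde (sz s) i"
  shows "qpol n sz q \<gamma> s t = q s t * \<gamma> s i"
proof -
  have "(THE j. j < n \<and> sz t = adde (sz s) j) = i"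
    using assms adde_inj by (intro the_equality) auto
  then show ?thesis using assms unfolding qpol_def by auto
qed

lemma qpol_not_up:
  "\<not> (\<exists>i<n. sz t = adde (sz s) i) \<Longrightarrow> qpol n sz q \<gamma> s t = q s t"
  unfolding qpol_def by (rule if_not_P)

lemma qpol_not_above:
  "sz t \<le> sz s \<Longrightarrow> qpol n sz q \<gamma> s t = q s t"
  using qpol_not_up not_adde_le order_trans le_adde by metis

lemma queueing_system_rate_kernel:
  "queueing_system n S sz q e0 \<Longrightarrow> rate_kernel S q"
  unfolding queueing_system_def rate_kernel_def by blast

lemma rate_kernel_qpol:
  assumes "rate_kernel S q" "admission_policy n S \<gamma>"
  shows "rate_kernel S (qpol n sz q \<gamma>)"
  unfolding rate_kernel_def
proof (intro ballI impI)
  fix s t assume st: "s \<in> S" "t \<in> S" "s \<noteq> t"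
  then have "0 \<le> q s t" using assms(1) unfolding rate_kernel_def by blast
  show "0 \<le> qpol n sz q \<gamma> s t"
  proof (cases "\<exists>i<n. sz t = adde (sz s) i")
    case True
    then obtain i where i: "i < n" "sz t = adde (sz s) i" by blast
    moreover have "0 \<le> \<gamma> s i"
      using assms(2) st(1) i(1) unfolding admission_policy_def by blast
    ultimately show ?thesis using qpol_up[OF i] \<open>0 \<le> q s t\<close> by simp
  next
    case False
    then show ?thesis using qpol_not_up \<open>0 \<le> q s t\<close> by metis
  qed
qed

text \<open>Only arrivals are controlled, so the downward paths of Assumption 1 survive every policy.\<close>
lemma assumption1_paths_to_empty:
  assumes "assumption1 n S sz q e0" and "\<And>u v. sz v \<le> sz u \<Longrightarrow> k u v = q u v" and "s \<in> S"
  shows "path_from_to S k (\<lambda>_ _. True) s e0"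
proof -
  have "path_from_to S q (\<lambda>u v. sz v \<le> sz u) s e0"
    using assms(1,3) unfolding assumption1_def by blast
  then show ?thesis by (rule path_from_to_mono) (simp add: assms(2))
qed

section \<open>Product form under balanced policies\<close>

lemma quasi_reversible_upward_flow:
  assumes fin: "finite S" and "quasi_reversible n S sz q" "stationary_measure S q Pi" "s \<in> S"
  shows "(\<Sum>t\<in>upper_neighbours n S sz (sz s). Pi s * q s t * w (sz t))
       = (\<Sum>t\<in>upper_neighbours n S sz (sz s). Pi t * q t s * w (sz t))"
proof -
  have "(\<Sum>t\<in>level S sz (adde (sz s) i). Pi s * q s t * w (sz t))
      = (\<Sum>t\<in>level S sz (adde (sz s) i). Pi t * q t s * w (sz t))" if "i < n" for i
  proof -
    have "(\<Sum>t\<in>level S sz (adde (sz s) i). Pi s * q s t * w (sz t))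
        = w (adde (sz s) i) * (Pi s * (\<Sum>t\<in>level S sz (adde (sz s) i). q s t))"
      by (simp add: sum_distrib_left level_def mult_ac)
    also have "\<dots> = w (adde (sz s) i) * (\<Sum>t\<in>level S sz (adde (sz s) i). Pi t * q t s)"
      using assms(2-4) that unfolding quasi_reversible_def by simp
    also have "\<dots> = (\<Sum>t\<in>level S sz (adde (sz s) i). Pi t * q t s * w (sz t))"
      by (simp add: sum_distrib_left level_def mult_ac)
    finally show ?thesis .
  qed
  then show ?thesis by (simp add: sum_upper_neighbours[OF fin])
qed

text \<open>Global balance minus the quasi-reversibility equations.\<close>
lemma quasi_reversible_non_upward_flow:
  assumes fin: "finite S" and "quasi_reversible n S sz q" "stationary_measure S q Pi" "s \<in> S"
  shows "(\<Sum>t\<in>S - upper_neighbours n S sz (sz s). Pi s * q s t)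
       = (\<Sum>t\<in>S - upper_neighbours n S sz (sz s). Pi t * q t s)"
proof -
  have sub: "upper_neighbours n S sz (sz s) \<subseteq> S" unfolding upper_neighbours_def by blast
  have "Pi s * (\<Sum>t\<in>S. q s t) = (\<Sum>t\<in>S. Pi t * q t s)"
    using assms(3,4) unfolding stationary_measure_def by blast
  moreover have "(\<Sum>t\<in>upper_neighbours n S sz (sz s). Pi s * q s t * 1)
      = (\<Sum>t\<in>upper_neighbours n S sz (sz s). Pi t * q t s * 1)"
    by (rule quasi_reversible_upward_flow[OF assms])
  ultimately show ?thesis
    using sum.subset_diff[OF sub fin, of "\<lambda>t. Pi s * q s t"] sum.subset_diff[OF sub fin, of "\<lambda>t. Pi t * q t s"]
    by (simp add: sum_distrib_left)
qed

definition balance_function ::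
  "nat \<Rightarrow> 'a set \<Rightarrow> ('a \<Rightarrow> nat \<Rightarrow> nat) \<Rightarrow> ('a \<Rightarrow> nat \<Rightarrow> real) \<Rightarrow> ((nat \<Rightarrow> nat) \<Rightarrow> real) \<Rightarrow> bool" where
  "balance_function n S sz \<gamma> \<Gamma> \<longleftrightarrow>
     (\<forall>s\<in>S. \<forall>i<n. adde (sz s) i \<in> sz ` S \<longrightarrow> \<Gamma> (sz s) * \<gamma> s i = \<Gamma> (adde (sz s) i))"

lemma balance_function_outflow:
  assumes "balance_function n S sz \<gamma> \<Gamma>" "s \<in> S" "t \<in> S"
  shows "\<Gamma> (sz s) * qpol n sz q \<gamma> s t
       = q s t * (if t \<in> upper_neighbours n S sz (sz s) then \<Gamma> (sz t) else \<Gamma> (sz s))"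
proof (cases "\<exists>i<n. sz t = adde (sz s) i")
  case True
  then obtain i where i: "i < n" "sz t = adde (sz s) i" by blast
  then have "\<Gamma> (sz s) * \<gamma> s i = \<Gamma> (sz t)"
    using assms unfolding balance_function_def by (metis image_eqI)
  then show ?thesis
    using qpol_up[OF i] i assms(3) unfolding upper_neighbours_def by auto
next
  case False
  then show ?thesis using qpol_not_up[OF False] unfolding upper_neighbours_def by auto
qed

lemma balance_function_inflow:
  assumes "queueing_system n S sz q e0" "balance_function n S sz \<gamma> \<Gamma>" "s \<in> S" "t \<in> S"
  shows "\<Gamma> (sz t) * qpol n sz q \<gamma> t s
       = q t s * (if t \<in> upper_neighbours n S sz (sz s) then \<Gamma> (sz t) else \<Gamma> (sz s))"
proof (cases "t \<in> upper_neighbours n S sz (sz s)")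
  case True
  then have "sz s \<le> sz t"
    unfolding upper_neighbours_def using le_adde by fastforce
  then show ?thesis using True qpol_not_above[OF \<open>sz s \<le> sz t\<close>] by (simp add: mult.commute)
next
  case not_up: False
  consider "q t s = 0" | "sz s = sz t" | i where "i < n" "sz s = adde (sz t) i"
    using assms(1,3,4) not_up unfolding queueing_system_def upper_neighbours_def by blast
  then show ?thesis
  proof cases
    case 1
    then show ?thesis by (simp add: qpol_def)
  next
    case 2
    then show ?thesis using not_up qpol_not_above[of sz s t] by simp
  next
    case (3 i)
    then have "\<Gamma> (sz t) * \<gamma> t i = \<Gamma> (sz s)"
      using assms(2-4) unfolding balance_function_def by (metis image_eqI)
    then show ?thesis using not_up qpol_up[OF 3] by (simp add: mult_ac)
  qed
qed

lemma sum_split_weight: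
  fixes f g :: "'a \<Rightarrow> 'b::comm_semiring_1"
  assumes "finite S" "U \<subseteq> S"
  shows "(\<Sum>t\<in>S. f t * (if t \<in> U then g t else c)) = (\<Sum>t\<in>U. f t * g t) + c * (\<Sum>t\<in>S - U. f t)"
proof -
  have "(\<Sum>t\<in>S. f t * (if t \<in> U then g t else c))
      = (\<Sum>t\<in>U. f t * (if t \<in> U then g t else c)) + (\<Sum>t\<in>S - U. f t * (if t \<in> U then g t else c))"
    by (simp only: sum.subset_diff[OF assms(2,1)] add.commute)
  also have "\<dots> = (\<Sum>t\<in>U. f t * g t) + (\<Sum>t\<in>S - U. c * f t)"
    by (intro arg_cong2[where f = "(+)"] sum.cong) (auto simp: mult.commute)
  finally show ?thesis by (simp add: sum_distrib_left)
qed

text \<open>Both the outflow from and the inflow into \<open>s\<close> carry the weight \<open>\<Gamma>(|t|)\<close> on upper neighbours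
  \<open>t\<close> of \<open>s\<close> and \<open>\<Gamma>(|s|)\<close> elsewhere; quasi-reversibility balances the first part, the rest of
  global balance the second.\<close>
theorem product_form_invariant_measure:
  assumes fin: "finite S" and qs: "queueing_system n S sz q e0" and qr: "quasi_reversible n S sz q"
    and Pi: "stationary_measure S q Pi"
    and "\<forall>x\<in>sz ` S. 0 \<le> \<Gamma> x" and bf: "balance_function n S sz \<gamma> \<Gamma>"
  shows "invariant_measure S (qpol n sz q \<gamma>) (\<lambda>s. Pi s * \<Gamma> (sz s))"
  unfolding invariant_measure_def
proof (intro conjI ballI)
  fix s assume s: "s \<in> S"
  show "0 \<le> Pi s * \<Gamma> (sz s)"
    using Pi assms(5) s unfolding stationary_measure_def by simp
  define Up where "Up = upper_neighbours n S sz (sz s)"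
  define w where "w t = (if t \<in> Up then \<Gamma> (sz t) else \<Gamma> (sz s))" for t
  have "Up \<subseteq> S" unfolding Up_def upper_neighbours_def by blast
  have "Pi s * \<Gamma> (sz s) * (\<Sum>t\<in>S. qpol n sz q \<gamma> s t) = (\<Sum>t\<in>S. Pi s * q s t * w t)"
    using balance_function_outflow[OF bf s]
    unfolding w_def Up_def by (simp add: sum_distrib_left mult.assoc)
  also have "\<dots> = (\<Sum>t\<in>Up. Pi s * q s t * \<Gamma> (sz t)) + \<Gamma> (sz s) * (\<Sum>t\<in>S - Up. Pi s * q s t)"
    unfolding w_def by (rule sum_split_weight[OF fin \<open>Up \<subseteq> S\<close>])
  also have "\<dots> = (\<Sum>t\<in>Up. Pi t * q t s * \<Gamma> (sz t)) + \<Gamma> (sz s) * (\<Sum>t\<in>S - Up. Pi t * q t s)"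
    unfolding Up_def
    using quasi_reversible_upward_flow[OF fin qr Pi s] quasi_reversible_non_upward_flow[OF fin qr Pi s]
    by simp
  also have "\<dots> = (\<Sum>t\<in>S. Pi t * q t s * w t)"
    unfolding w_def by (rule sum_split_weight[OF fin \<open>Up \<subseteq> S\<close>, symmetric])
  also have "\<dots> = (\<Sum>t\<in>S. Pi t * \<Gamma> (sz t) * qpol n sz q \<gamma> t s)"
    using balance_function_inflow[OF qs bf s]
    unfolding w_def Up_def by (intro sum.cong) (simp_all add: mult.assoc)
  finally show "Pi s * \<Gamma> (sz s) * (\<Sum>t\<in>S. qpol n sz q \<gamma> s t)
      = (\<Sum>t\<in>S. Pi t * \<Gamma> (sz t) * qpol n sz q \<gamma> t s)" .
qed

section \<open>Rewards as values of the linear program\<close>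

definition lp_mass :: "'a set \<Rightarrow> ('a \<Rightarrow> nat \<Rightarrow> nat) \<Rightarrow> ('a \<Rightarrow> real) \<Rightarrow> ((nat \<Rightarrow> nat) \<Rightarrow> real) \<Rightarrow> real" where
  "lp_mass S sz Pi \<Gamma> = (\<Sum>s\<in>S. Pi s * \<Gamma> (sz s))"

lemma stationary_measure_pos_empty_state:
  assumes "finite S" "queueing_system n S sz q e0" "assumption1 n S sz q e0" "stationary_measure S q Pi"
  shows "0 < Pi e0"
  using stationary_measure_pos_at_accessible[OF assms(1) queueing_system_rate_kernel[OF assms(2)] assms(4)]
    assumption1_paths_to_empty[OF assms(3), of q] by blast

lemma lp_mass_pos:
  assumes "finite S" "queueing_system n S sz q e0" "\<forall>s\<in>S. 0 \<le> Pi s" "0 < Pi e0"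
    and "\<forall>x\<in>sz ` S. 0 \<le> \<Gamma> x" "0 < \<Gamma> zvec"
  shows "0 < lp_mass S sz Pi \<Gamma>"
proof -
  have "e0 \<in> S" "sz e0 = zvec" using assms(2) unfolding queueing_system_def by auto
  then have "Pi e0 * \<Gamma> (sz e0) \<le> lp_mass S sz Pi \<Gamma>"
    unfolding lp_mass_def using assms(1,3,5) by (intro member_le_sum) auto
  moreover have "0 < Pi e0 * \<Gamma> (sz e0)" using assms(4,6) \<open>sz e0 = zvec\<close> by simp
  ultimately show ?thesis by linarith
qed

lemma balance_function_divide:
  "balance_function n S sz \<gamma> \<Gamma> \<Longrightarrow> balance_function n S sz \<gamma> (\<lambda>x. \<Gamma> x / c)"
  unfolding balance_function_def by (metis times_divide_eq_left)

lemma reward_product_form: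
  assumes fin: "finite S" and bf: "balance_function n S sz \<gamma> G"
    and P: "\<forall>s\<in>S. P s = Pi s * G (sz s)"
  shows "reward S (qpol n sz q \<gamma>) r R P = lp_objective n S sz q Pi r R G"
proof -
  have "(\<Sum>t\<in>S. P s * qpol n sz q \<gamma> s t * R s t)
      = (\<Sum>i<n. \<Sum>t\<in>level S sz (adde (sz s) i). Pi s * G (adde (sz s) i) * q s t * R s t)
        + (\<Sum>t\<in>{t\<in>S. \<not> (\<exists>i<n. sz t = adde (sz s) i)}. Pi s * G (sz s) * q s t * R s t)"
    if s: "s \<in> S" for s
  proof -
    define Up where "Up = upper_neighbours n S sz (sz s)"
    have "Up \<subseteq> S" unfolding Up_def upper_neighbours_def by blast
    have "(\<Sum>t\<in>S. P s * qpol n sz q \<gamma> s t * R s t)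
        = (\<Sum>t\<in>S. Pi s * q s t * R s t * (if t \<in> Up then G (sz t) else G (sz s)))"
      using balance_function_outflow[OF bf s] P s unfolding Up_def
      by (intro sum.cong) (simp_all add: mult_ac)
    also have "\<dots> = (\<Sum>t\<in>Up. Pi s * q s t * R s t * G (sz t))
        + G (sz s) * (\<Sum>t\<in>S - Up. Pi s * q s t * R s t)"
      by (rule sum_split_weight[OF fin \<open>Up \<subseteq> S\<close>])
    also have "(\<Sum>t\<in>Up. Pi s * q s t * R s t * G (sz t))
        = (\<Sum>i<n. \<Sum>t\<in>level S sz (adde (sz s) i). Pi s * G (adde (sz s) i) * q s t * R s t)"
      unfolding Up_def sum_upper_neighbours[OF fin]
      by (intro sum.cong refl) (simp add: level_def mult_ac)
    also have "S - Up = {t\<in>S. \<not> (\<exists>i<n. sz t = adde (sz s) i)}"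
      unfolding Up_def upper_neighbours_def by blast
    finally show ?thesis by (simp add: sum_distrib_left mult_ac)
  qed
  then show ?thesis
    unfolding reward_def lp_objective_def using P by (simp add: sum.distrib add.assoc)
qed

lemma normalized_balance_function_feasible:
  assumes adm: "admission_policy n S \<gamma>" and nonneg: "\<forall>x\<in>sz ` S. 0 \<le> \<Gamma> x"
    and bf: "balance_function n S sz \<gamma> \<Gamma>" and pos: "0 < lp_mass S sz Pi \<Gamma>"
  shows "lp_feasible n S sz Pi (\<lambda>x. \<Gamma> x / lp_mass S sz Pi \<Gamma>)"
  unfolding lp_feasible_def
proof (intro conjI ballI allI impI)
  fix x assume "x \<in> sz ` S"
  then have "0 \<le> \<Gamma> x" using nonneg by blast
  then show "0 \<le> \<Gamma> x / lp_mass S sz Pi \<Gamma>" using pos by simp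
next
  fix x i assume x: "x \<in> sz ` S" and i: "i < n" and "adde x i \<in> sz ` S"
  then obtain s where "s \<in> S" "x = sz s" by blast
  then have "\<Gamma> (adde x i) = \<Gamma> x * \<gamma> s i" "\<gamma> s i \<le> 1"
    using bf adm i \<open>adde x i \<in> sz ` S\<close> unfolding balance_function_def admission_policy_def by auto
  moreover have "0 \<le> \<Gamma> x" using nonneg x by blast
  ultimately have "\<Gamma> (adde x i) \<le> \<Gamma> x"
    by (simp add: mult_left_le)
  then show "\<Gamma> (adde x i) / lp_mass S sz Pi \<Gamma> \<le> \<Gamma> x / lp_mass S sz Pi \<Gamma>"
    using pos by (simp add: divide_right_mono)
next
  show "(\<Sum>s\<in>S. Pi s * (\<Gamma> (sz s) / lp_mass S sz Pi \<Gamma>)) = 1"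
    using pos unfolding lp_mass_def by (simp add: sum_divide_distrib[symmetric])
qed

lemma balanced_policy_stationary_distribution:
  assumes fin: "finite S" and qs: "queueing_system n S sz q e0" and a1: "assumption1 n S sz q e0"
    and qr: "quasi_reversible n S sz q" and Pi: "stationary_measure S q Pi"
    and adm: "admission_policy n S \<gamma>"
    and nonneg: "\<forall>x\<in>sz ` S. 0 \<le> \<Gamma> x" and "\<Gamma> zvec = 1" and bf: "balance_function n S sz \<gamma> \<Gamma>"
    and P: "stationary_distribution S (qpol n sz q \<gamma>) P" and "s \<in> S"
  shows "P s = Pi s * \<Gamma> (sz s) / lp_mass S sz Pi \<Gamma>"
proof -
  let ?Z = "lp_mass S sz Pi \<Gamma>"
  have Pi_nonneg: "\<forall>s\<in>S. 0 \<le> Pi s" using Pi unfolding stationary_measure_def by blast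
  have "0 < ?Z"
    using lp_mass_pos[OF fin qs Pi_nonneg stationary_measure_pos_empty_state[OF fin qs a1 Pi] nonneg]
      \<open>\<Gamma> zvec = 1\<close> by simp
  have rk: "rate_kernel S (qpol n sz q \<gamma>)"
    by (rule rate_kernel_qpol[OF queueing_system_rate_kernel[OF qs] adm])
  have "invariant_measure S (qpol n sz q \<gamma>) (\<lambda>s. Pi s * \<Gamma> (sz s))"
    by (rule product_form_invariant_measure[OF fin qs qr Pi nonneg bf])
  then have "stationary_distribution S (qpol n sz q \<gamma>) (\<lambda>s. Pi s * \<Gamma> (sz s) / ?Z)"
    using \<open>0 < ?Z\<close> unfolding stationary_distribution_iff invariant_measure_def lp_mass_def
    by (simp add: sum_divide_distrib[symmetric] flip: sum_divide_distrib)
  moreover have "e0 \<in> S" using qs unfolding queueing_system_def by blast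
  moreover have "\<forall>s\<in>S. path_from_to S (qpol n sz q \<gamma>) (\<lambda>_ _. True) s e0"
    using assumption1_paths_to_empty[OF a1] qpol_not_above by metis
  ultimately show ?thesis
    using stationary_distribution_unique[OF fin rk \<open>e0 \<in> S\<close>, of P] P \<open>s \<in> S\<close> by simp
qed

lemma balanced_policy_reward:
  assumes "finite S" "queueing_system n S sz q e0" "assumption1 n S sz q e0"
    and "quasi_reversible n S sz q" "stationary_measure S q Pi" "admission_policy n S \<gamma>"
    and "\<forall>x\<in>sz ` S. 0 \<le> \<Gamma> x" "\<Gamma> zvec = 1" and bf: "balance_function n S sz \<gamma> \<Gamma>"
    and "stationary_distribution S (qpol n sz q \<gamma>) P"
  shows "reward S (qpol n sz q \<gamma>) r R P = lp_objective n S sz q Pi r R (\<lambda>x. \<Gamma> x / lp_mass S sz Pi \<Gamma>)"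
  using balanced_policy_stationary_distribution[OF assms]
  by (intro reward_product_form[OF assms(1) balance_function_divide[OF bf]]) simp

section \<open>Optimality of Ferrers sets\<close>

lemma lp_objective_add_scaled:
  "lp_objective n S sz q Pi r R (\<lambda>x. c * f x + g x)
     = c * lp_objective n S sz q Pi r R f + lp_objective n S sz q Pi r R g"
  unfolding lp_objective_def
  by (simp add: sum.distrib sum_distrib_left distrib_left distrib_right mult_ac)

lemma lp_mass_add_scaled:
  "lp_mass S sz Pi (\<lambda>x. c * f x + g x) = c * lp_mass S sz Pi f + lp_mass S sz Pi g"
  unfolding lp_mass_def by (simp add: sum.distrib sum_distrib_left distrib_left mult_ac)

lemma lp_objective_eq_0:
  assumes "\<forall>x\<in>sz ` S. f x = 0"
  shows "lp_objective n S sz q Pi r R f = 0"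
proof -
  have "f (adde (sz s) i) = 0" if "t \<in> level S sz (adde (sz s) i)" for s t i
    using assms that unfolding level_def by force
  then show ?thesis
    using assms unfolding lp_objective_def by simp
qed

lemma lp_mass_eq_0: "\<forall>x\<in>sz ` S. f x = 0 \<Longrightarrow> lp_mass S sz Pi f = 0"
  unfolding lp_mass_def by simp

lemma Ferrers_antimono:
  fixes G :: "(nat \<Rightarrow> nat) \<Rightarrow> 'b::preorder"
  assumes V: "Ferrers n V"
    and mono: "\<forall>x\<in>V. \<forall>i<n. adde x i \<in> V \<longrightarrow> G (adde x i) \<le> G x"
    and "x \<in> V"
  shows "y \<le> x \<Longrightarrow> G x \<le> G y"
proof (induction "\<Sum>j<n. x j - y j" arbitrary: y rule: less_induct)
  case less
  have down: "\<And>y. y \<le> x \<Longrightarrow> y \<in> V" and "\<forall>j\<ge>n. x j = 0"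
    using V \<open>x \<in> V\<close> unfolding Ferrers_def vecs_def by blast+
  show ?case
  proof (cases "\<exists>j<n. y j < x j")
    case False
    then have "y = x"
      using less.prems \<open>\<forall>j\<ge>n. x j = 0\<close> by (intro ext) (metis le_fun_def le_neq_implies_less not_le le0)
    then show ?thesis by simp
  next
    case True
    then obtain j where j: "j < n" "y j < x j" by blast
    then have "adde y j \<le> x"
      using less.prems unfolding adde_def le_fun_def by auto
    moreover have "(\<Sum>m<n. x m - adde y j m) < (\<Sum>m<n. x m - y m)"
      using j by (intro sum_strict_mono_ex1) (auto simp: adde_def)
    ultimately have "G x \<le> G (adde y j)" using less.hyps by blast
    also have "G (adde y j) \<le> G y"
      using mono down[OF less.prems] down[OF \<open>adde y j \<le> x\<close>] j(1) by blast
    finally show ?thesis .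
  qed
qed

lemma Ferrers_superlevel:
  fixes G :: "(nat \<Rightarrow> nat) \<Rightarrow> 'b::preorder"
  assumes V: "Ferrers n V"
    and mono: "\<forall>x\<in>V. \<forall>i<n. adde x i \<in> V \<longrightarrow> G (adde x i) \<le> G x"
    and "x0 \<in> V" "c < G x0"
  shows "Ferrers n {x\<in>V. c < G x}"
  unfolding Ferrers_def
proof (intro conjI ballI allI impI)
  show "{x\<in>V. c < G x} \<subseteq> vecs n" using V unfolding Ferrers_def by blast
  have "zvec \<le> x0" unfolding zvec_def le_fun_def by simp
  then show "zvec \<in> {x\<in>V. c < G x}"
    using Ferrers_antimono[OF V mono \<open>x0 \<in> V\<close>] V \<open>x0 \<in> V\<close> \<open>c < G x0\<close>
    unfolding Ferrers_def by (blast intro: less_le_trans)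
next
  fix x y assume "x \<in> {x\<in>V. c < G x}" "y \<le> x"
  then show "y \<in> {x\<in>V. c < G x}"
    using Ferrers_antimono[OF V mono, of x y] V unfolding Ferrers_def by (blast intro: less_le_trans)
qed

lemma antimono_peel_support_layer:
  fixes G :: "(nat \<Rightarrow> nat) \<Rightarrow> real"
  assumes "finite V" and nonneg: "\<forall>x\<in>V. 0 \<le> G x"
    and mono: "\<forall>x\<in>V. \<forall>i<n. adde x i \<in> V \<longrightarrow> G (adde x i) \<le> G x"
    and "{x\<in>V. 0 < G x} \<noteq> {}"
  obtains c G' where "0 < c" "\<forall>x\<in>V. G x = c * of_bool (0 < G x) + G' x"
    "\<forall>x\<in>V. 0 \<le> G' x" "\<forall>x\<in>V. \<forall>i<n. adde x i \<in> V \<longrightarrow> G' (adde x i) \<le> G' x"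
    "{x\<in>V. 0 < G' x} \<subset> {x\<in>V. 0 < G x}"
proof -
  define A where "A = {x\<in>V. 0 < G x}"
  have "finite A" using \<open>finite V\<close> unfolding A_def by simp
  define c where "c = Min (G ` A)"
  have "c \<in> G ` A" unfolding c_def using \<open>finite A\<close> assms(4) unfolding A_def by (intro Min_in) auto
  then obtain x0 where "x0 \<in> A" "G x0 = c" by blast
  have c_le: "\<forall>x\<in>V. 0 < G x \<longrightarrow> c \<le> G x" and "0 < c"
    using \<open>finite A\<close> \<open>x0 \<in> A\<close> \<open>G x0 = c\<close> unfolding c_def A_def by auto
  define G' where "G' x = G x - c * of_bool (0 < G x)" for x
  have "\<forall>x\<in>V. 0 \<le> G' x" using nonneg c_le unfolding G'_def by auto
  moreover have "\<forall>x\<in>V. \<forall>i<n. adde x i \<in> V \<longrightarrow> G' (adde x i) \<le> G' x"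
  proof (intro ballI allI impI)
    fix x i assume "x \<in> V" "i < n" "adde x i \<in> V"
    then have "G (adde x i) \<le> G x" "0 \<le> G (adde x i)" "0 < G x \<longrightarrow> c \<le> G x"
      using nonneg mono c_le by auto
    then show "G' (adde x i) \<le> G' x"
      unfolding G'_def by (cases "0 < G (adde x i)"; cases "0 < G x") auto
  qed
  moreover have "{x\<in>V. 0 < G' x} \<subset> {x\<in>V. 0 < G x}"
    using \<open>0 < c\<close> \<open>x0 \<in> A\<close> \<open>G x0 = c\<close> unfolding A_def G'_def by (auto split: if_splits)
  moreover have "\<forall>x\<in>V. G x = c * of_bool (0 < G x) + G' x" unfolding G'_def by simp
  ultimately show ?thesis using that[OF \<open>0 < c\<close>] by blast
qed

lemma linear_functional_cong:
  fixes F :: "('a \<Rightarrow> real) \<Rightarrow> real"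
  assumes lin: "\<And>c f g. F (\<lambda>x. c * f x + g x) = c * F f + F g"
    and local: "\<And>f. \<forall>x\<in>V. f x = 0 \<Longrightarrow> F f = 0"
    and "\<forall>x\<in>V. f x = g x"
  shows "F f = F g"
proof -
  have "f = (\<lambda>x. 1 * g x + (f x - g x))" by simp
  moreover have "F (\<lambda>x. f x - g x) = 0"
    using local assms(3) by simp
  ultimately show ?thesis
    using lin[of 1 g "\<lambda>x. f x - g x"] by simp
qed

text \<open>Layer-cake argument: a nonnegative nonincreasing function on \<open>V\<close> is a nonnegative combination
  of indicators of Ferrers sets, peeled off one level set at a time.\<close>
lemma linear_bound_by_Ferrers_indicators:
  fixes F N :: "((nat \<Rightarrow> nat) \<Rightarrow> real) \<Rightarrow> real"
  assumes "finite V" and V: "Ferrers n V"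
    and F_lin: "\<And>c f g. F (\<lambda>x. c * f x + g x) = c * F f + F g"
    and N_lin: "\<And>c f g. N (\<lambda>x. c * f x + g x) = c * N f + N g"
    and F_local: "\<And>f. \<forall>x\<in>V. f x = 0 \<Longrightarrow> F f = 0"
    and N_local: "\<And>f. \<forall>x\<in>V. f x = 0 \<Longrightarrow> N f = 0"
    and indicator_bound: "\<And>A. Ferrers n A \<Longrightarrow> A \<subseteq> V \<Longrightarrow>
           F (\<lambda>x. of_bool (x \<in> A)) \<le> M * N (\<lambda>x. of_bool (x \<in> A))"
  shows "\<forall>x\<in>V. 0 \<le> G x \<Longrightarrow> \<forall>x\<in>V. \<forall>i<n. adde x i \<in> V \<longrightarrow> G (adde x i) \<le> G x \<Longrightarrow>
    F G \<le> M * N G"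
proof (induction "card {x\<in>V. 0 < G x}" arbitrary: G rule: less_induct)
  case less
  define A where "A = {x\<in>V. 0 < G x}"
  show ?case
  proof (cases "A = {}")
    case True
    then have "\<forall>x\<in>V. G x = 0" using less.prems(1) unfolding A_def by force
    then show ?thesis using F_local N_local by simp
  next
    case False
    then have "{x\<in>V. 0 < G x} \<noteq> {}" unfolding A_def .
    then obtain c G' where "0 < c" and G_eq: "\<forall>x\<in>V. G x = c * of_bool (0 < G x) + G' x"
      and G': "\<forall>x\<in>V. 0 \<le> G' x" "\<forall>x\<in>V. \<forall>i<n. adde x i \<in> V \<longrightarrow> G' (adde x i) \<le> G' x"
      and "{x\<in>V. 0 < G' x} \<subset> {x\<in>V. 0 < G x}"
      by (rule antimono_peel_support_layer[OF \<open>finite V\<close> less.prems])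
    moreover have "finite {x\<in>V. 0 < G x}" using \<open>finite V\<close> by simp
    ultimately have "card {x\<in>V. 0 < G' x} < card {x\<in>V. 0 < G x}"
      by (simp add: psubset_card_mono)
    then have "F G' \<le> M * N G'"
      using less.hyps G' by blast
    moreover obtain x0 where "x0 \<in> A" using False by blast
    then have "Ferrers n A"
      using Ferrers_superlevel[OF V less.prems(2)] unfolding A_def by blast
    then have "F (\<lambda>x. of_bool (x \<in> A)) \<le> M * N (\<lambda>x. of_bool (x \<in> A))"
      using indicator_bound unfolding A_def by blast
    ultimately have bound:
      "c * F (\<lambda>x. of_bool (x \<in> A)) + F G' \<le> c * (M * N (\<lambda>x. of_bool (x \<in> A))) + M * N G'"
      using \<open>0 < c\<close> by (intro add_mono mult_left_mono) auto
    have G_eqA: "\<forall>x\<in>V. G x = c * of_bool (x \<in> A) + G' x"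
      using G_eq unfolding A_def by simp
    have "F G = c * F (\<lambda>x. of_bool (x \<in> A)) + F G'" "N G = c * N (\<lambda>x. of_bool (x \<in> A)) + N G'"
      using linear_functional_cong[where F = F, OF F_lin F_local G_eqA]
        linear_functional_cong[where F = N, OF N_lin N_local G_eqA]
        F_lin[of c _ G'] N_lin[of c _ G'] by simp_all
    with bound show ?thesis by (simp add: algebra_simps)
  qed
qed

lemma lp_objective_divide:
  "lp_objective n S sz q Pi r R (\<lambda>x. f x / c) = lp_objective n S sz q Pi r R f / c"
  unfolding lp_objective_def by (simp add: sum_divide_distrib add_divide_distrib)

lemma GammaA_eq:
  assumes "finite S"
  shows "GammaA S sz Pi A = (\<lambda>x. of_bool (x \<in> A) / lp_mass S sz Pi (\<lambda>x. of_bool (x \<in> A)))"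
  unfolding GammaA_def lp_mass_def using assms by (auto simp: Collect_conj_eq)

lemma lp_optimum_at_Ferrers_set:
  assumes fin: "finite S" and qs: "queueing_system n S sz q e0"
    and Pi_nonneg: "\<forall>s\<in>S. 0 \<le> Pi s" and "0 < Pi e0"
  shows "\<exists>A. Ferrers n A \<and> A \<subseteq> sz ` S \<and>
    (\<forall>\<Gamma>. lp_feasible n S sz Pi \<Gamma> \<longrightarrow>
       lp_objective n S sz q Pi r R \<Gamma> \<le> lp_objective n S sz q Pi r R (GammaA S sz Pi A))"
proof -
  let ?F = "lp_objective n S sz q Pi r R" and ?N = "lp_mass S sz Pi"
  define score where "score B = ?F (GammaA S sz Pi B)" for B
  define Fam where "Fam = {A. Ferrers n A \<and> A \<subseteq> sz ` S}"
  have "Fam \<subseteq> Pow (sz ` S)" unfolding Fam_def by blast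
  then have "finite Fam" using fin by (simp add: finite_subset)
  moreover have "sz ` S \<in> Fam" using qs unfolding Fam_def queueing_system_def by blast
  ultimately have "Max (score ` Fam) \<in> score ` Fam"
    by (intro Max_in) auto
  then obtain A where "A \<in> Fam" and "score A = Max (score ` Fam)"
    by (auto simp del: Max_in)
  then have A_max: "score B \<le> score A" if "B \<in> Fam" for B
    using \<open>finite Fam\<close> that by simp
  have indicator_bound:
    "?F (\<lambda>x. of_bool (x \<in> B)) \<le> ?F (GammaA S sz Pi A) * ?N (\<lambda>x. of_bool (x \<in> B))"
    if "Ferrers n B" "B \<subseteq> sz ` S" for B
  proof -
    have "0 < ?N (\<lambda>x. of_bool (x \<in> B))"
      using lp_mass_pos[OF fin qs Pi_nonneg \<open>0 < Pi e0\<close>] that(1) unfolding Ferrers_def by simp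
    moreover have "?F (GammaA S sz Pi B) = ?F (\<lambda>x. of_bool (x \<in> B)) / ?N (\<lambda>x. of_bool (x \<in> B))"
      by (simp add: GammaA_eq[OF fin] lp_objective_divide)
    then have "?F (\<lambda>x. of_bool (x \<in> B)) / ?N (\<lambda>x. of_bool (x \<in> B)) \<le> ?F (GammaA S sz Pi A)"
      using A_max[of B] that unfolding Fam_def score_def by simp
    ultimately show ?thesis by (simp add: divide_le_eq)
  qed
  have V: "finite (sz ` S)" "Ferrers n (sz ` S)"
    using fin qs unfolding queueing_system_def by auto
  have "?F \<Gamma> \<le> ?F (GammaA S sz Pi A)" if "lp_feasible n S sz Pi \<Gamma>" for \<Gamma>
  proof -
    have "\<forall>x\<in>sz ` S. 0 \<le> \<Gamma> x" "\<forall>x\<in>sz ` S. \<forall>i<n. adde x i \<in> sz ` S \<longrightarrow> \<Gamma> (adde x i) \<le> \<Gamma> x"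
      and mass: "?N \<Gamma> = 1"
      using that unfolding lp_feasible_def lp_mass_def by auto
    then have "?F \<Gamma> \<le> ?F (GammaA S sz Pi A) * ?N \<Gamma>"
      by (intro linear_bound_by_Ferrers_indicators[OF V lp_objective_add_scaled lp_mass_add_scaled
          lp_objective_eq_0 lp_mass_eq_0 indicator_bound])
    then show ?thesis using mass by simp
  qed
  then show ?thesis
    using \<open>A \<in> Fam\<close> unfolding Fam_def by blast
qed

lemma balanced_policy_reward_lp_feasible:
  assumes fin: "finite S" and qs: "queueing_system n S sz q e0" and a1: "assumption1 n S sz q e0"
    and qr: "quasi_reversible n S sz q" and Pi: "stationary_measure S q Pi"
    and adm: "admission_policy n S \<gamma>" and "balanced n S sz \<gamma>"
    and P: "stationary_distribution S (qpol n sz q \<gamma>) P"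
  shows "\<exists>\<Gamma>. lp_feasible n S sz Pi \<Gamma> \<and> reward S (qpol n sz q \<gamma>) r R P = lp_objective n S sz q Pi r R \<Gamma>"
proof -
  have "\<exists>\<Gamma>. (\<forall>x\<in>sz ` S. 0 \<le> \<Gamma> x) \<and> \<Gamma> zvec = 1 \<and> balance_function n S sz \<gamma> \<Gamma>"
    using \<open>balanced n S sz \<gamma>\<close> unfolding balanced_def balance_function_def by (rule conjunct2)
  then obtain \<Gamma> where nonneg: "\<forall>x\<in>sz ` S. 0 \<le> \<Gamma> x" and "\<Gamma> zvec = 1"
    and bf: "balance_function n S sz \<gamma> \<Gamma>"
    by (elim exE conjE)
  have Pi_nonneg: "\<forall>s\<in>S. 0 \<le> Pi s" using Pi unfolding stationary_measure_def by blast
  have "0 < lp_mass S sz Pi \<Gamma>"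
    using lp_mass_pos[OF fin qs Pi_nonneg stationary_measure_pos_empty_state[OF fin qs a1 Pi] nonneg]
      \<open>\<Gamma> zvec = 1\<close> by simp
  then show ?thesis
    by (intro exI[of _ "\<lambda>x. \<Gamma> x / lp_mass S sz Pi \<Gamma>"] conjI normalized_balance_function_feasible[OF adm nonneg bf]
        balanced_policy_reward[OF fin qs a1 qr Pi adm nonneg \<open>\<Gamma> zvec = 1\<close> bf P])
qed

lemma det_policy_admission_policy: "admission_policy n S (det_policy sz A)"
  unfolding admission_policy_def det_policy_def by simp

lemma Ferrers_adde_closed: "Ferrers n A \<Longrightarrow> adde x i \<in> A \<Longrightarrow> x \<in> A"
  using le_adde unfolding Ferrers_def by blast

lemma det_policy_balance_function:
  assumes "Ferrers n A"
  shows "balance_function n S sz (det_policy sz A) (\<lambda>x. of_bool (x \<in> A))"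
  using Ferrers_adde_closed[OF assms] unfolding balance_function_def det_policy_def by auto

lemma det_policy_balanced:
  assumes "Ferrers n A"
  shows "balanced n S sz (det_policy sz A)"
proof -
  have "zvec \<in> A" using assms unfolding Ferrers_def by blast
  then show ?thesis
    using det_policy_balance_function[OF assms, of S sz]
    unfolding balanced_def balance_function_def
    by (intro conjI exI[of _ "\<lambda>x. of_bool (x \<in> A)"]) (simp_all add: det_policy_def)
qed

lemma GammaA_lp_feasible:
  assumes fin: "finite S" and qs: "queueing_system n S sz q e0"
    and "\<forall>s\<in>S. 0 \<le> Pi s" "0 < Pi e0" and A: "Ferrers n A"
  shows "lp_feasible n S sz Pi (GammaA S sz Pi A)"
proof -
  have "0 < lp_mass S sz Pi (\<lambda>x. of_bool (x \<in> A))"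
    using lp_mass_pos[OF fin qs assms(3,4)] A unfolding Ferrers_def by simp
  then show ?thesis
    unfolding GammaA_eq[OF fin]
    using normalized_balance_function_feasible[OF det_policy_admission_policy[of n S sz A] _
        det_policy_balance_function[OF A, of S sz]] by simp
qed

lemma det_policy_reward:
  assumes "finite S" "queueing_system n S sz q e0" "assumption1 n S sz q e0"
    and "quasi_reversible n S sz q" "stationary_measure S q Pi" and A: "Ferrers n A"
    and "stationary_distribution S (qpol n sz q (det_policy sz A)) PA"
  shows "reward S (qpol n sz q (det_policy sz A)) r R PA = lp_objective n S sz q Pi r R (GammaA S sz Pi A)"
  unfolding GammaA_eq[OF assms(1)]
  using A by (intro balanced_policy_reward[OF assms(1-5) det_policy_admission_policy _ _
      det_policy_balance_function[OF A] assms(7)]) (auto simp: Ferrers_def)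

theorem mainTheorem7:
  fixes n :: nat and S :: "'a set" and sz :: "'a \<Rightarrow> nat \<Rightarrow> nat"
    and q :: "'a \<Rightarrow> 'a \<Rightarrow> real" and e0 :: 'a
    and Pi :: "'a \<Rightarrow> real" and r :: "'a \<Rightarrow> real" and R :: "'a \<Rightarrow> 'a \<Rightarrow> real"
  assumes "finite S"
    and "queueing_system n S sz q e0"
    and "assumption1 n S sz q e0"
    and "quasi_reversible n S sz q"
    and "stationary_measure S q Pi"
  shows "\<exists>A. Ferrers n A \<and> A \<subseteq> sz ` S \<and>
           admission_policy n S (det_policy sz A) \<and>
           balanced n S sz (det_policy sz A) \<and>
           (\<forall>\<gamma>. admission_policy n S \<gamma> \<and> balanced n S sz \<gamma> \<longrightarrow>
              (\<forall>P PA. stationary_distribution S (qpol n sz q \<gamma>) P \<longrightarrow>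
                 stationary_distribution S (qpol n sz q (det_policy sz A)) PA \<longrightarrow>
                 reward S (qpol n sz q (det_policy sz A)) r R PA
                   \<ge> reward S (qpol n sz q \<gamma>) r R P)) \<and>
           lp_feasible n S sz Pi (GammaA S sz Pi A) \<and>
           (\<forall>\<Gamma>. lp_feasible n S sz Pi \<Gamma> \<longrightarrow>
              lp_objective n S sz q Pi r R \<Gamma> \<le> lp_objective n S sz q Pi r R (GammaA S sz Pi A))"
proof -
  have Pi_nonneg: "\<forall>s\<in>S. 0 \<le> Pi s" using assms(5) unfolding stationary_measure_def by blast
  note Pi_e0 = stationary_measure_pos_empty_state[OF assms(1,2,3,5)]
  obtain A where A: "Ferrers n A" "A \<subseteq> sz ` S"
    and optimal: "\<forall>\<Gamma>. lp_feasible n S sz Pi \<Gamma> \<longrightarrow>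
      lp_objective n S sz q Pi r R \<Gamma> \<le> lp_objective n S sz q Pi r R (GammaA S sz Pi A)"
    using lp_optimum_at_Ferrers_set[OF assms(1,2) Pi_nonneg Pi_e0] by blast
  have "reward S (qpol n sz q \<gamma>) r R P \<le> reward S (qpol n sz q (det_policy sz A)) r R PA"
    if policy: "admission_policy n S \<gamma>" "balanced n S sz \<gamma>" "stationary_distribution S (qpol n sz q \<gamma>) P"
      and PA: "stationary_distribution S (qpol n sz q (det_policy sz A)) PA" for \<gamma> P PA
  proof -
    obtain \<Gamma> where "lp_feasible n S sz Pi \<Gamma>"
      and "reward S (qpol n sz q \<gamma>) r R P = lp_objective n S sz q Pi r R \<Gamma>"
      using balanced_policy_reward_lp_feasible[OF assms policy] by blast
    then show ?thesis using optimal det_policy_reward[OF assms A(1) PA] by simp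
  qed
  then show ?thesis
    using A optimal det_policy_admission_policy det_policy_balanced[OF A(1)]
      GammaA_lp_feasible[OF assms(1,2) Pi_nonneg Pi_e0 A(1)] by blast
qed

end
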